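(* Let $X$ be a real topological vector space and let $C\subseteq X$ be convex. Then $\operatorname{fri} C$ is a convex subset of $C$.
   Context: For a convex set $C$ in a real vector space, a convex subset $F\subseteq C$ is a face of $C$ if for every $x\in F$ and all $y,z\in C$ with $x\in(y,z)$ we have $y,z\in F$, where $(y,z)=\{(1-t)y+tz: t\in(0,1)\}$ is the open segment. For $x\in C$, $F_{\min}(x,C)$ denotes the minimal face of $C$ containing $x$ (the intersection of all faces of $C$ containing $x$). The face relative interior is $\operatorname{fri} C=\{x\in C: C\subseteq \overline{F_{\min}(x,C)}\}$, where the bar denotes topological closure in $X$. *)

theory Defs
  imports "HOL-Analysis.Analysis"
begin

class topological_real_vector = real_vector + topological_space +
  assumes tendsto_add_tvs:
    "((\<lambda>p::'a \<times> 'a. fst p + snd p) \<longlongrightarrow> a + b) (nhds a \<times>\<^sub>F nhds b)"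
  assumes tendsto_scaleR_tvs:
    "((\<lambda>p::real \<times> 'a. fst p *\<^sub>R snd p) \<longlongrightarrow> r *\<^sub>R b) (nhds r \<times>\<^sub>F nhds b)"

definition F_min :: "'a::real_vector \<Rightarrow> 'a set \<Rightarrow> 'a set" where
  "F_min x C = \<Inter> {F. F face_of C \<and> x \<in> F}"

definition fri :: "'a::{real_vector,topological_space} set \<Rightarrow> 'a set" where
  "fri C = {x \<in> C. C \<subseteq> closure (F_min x C)}"

end

theory Submission
  imports Defs
begin

text \<open>Every face of C containing a point of the open segment from x to y contains x, so along
such a segment the minimal face can only grow. Hence the open segment from a point of fri C to
any point of C stays in fri C; only one endpoint needs to lie in fri C.\<close>

lemma F_min_subset_open_segment:
  assumes "x \<in> C" "y \<in> C" "z \<in> open_segment x y"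
  shows "F_min x C \<subseteq> F_min z C"
  unfolding F_min_def
proof (rule Inter_greatest)
  fix F assume "F \<in> {F. F face_of C \<and> z \<in> F}"
  then have F: "F face_of C" "z \<in> F" by auto
  then have "x \<in> F" using assms face_ofD by blast
  with F show "\<Inter> {F. F face_of C \<and> x \<in> F} \<subseteq> F" by blast
qed

lemma fri_subset: "fri C \<subseteq> C"
  unfolding fri_def by auto

lemma open_segment_subset_fri:
  assumes "convex C" "x \<in> fri C" "y \<in> C"
  shows "open_segment x y \<subseteq> fri C"
proof
  fix z assume z: "z \<in> open_segment x y"
  have xC: "x \<in> C" and "C \<subseteq> closure (F_min x C)"
    using assms(2) unfolding fri_def by auto
  moreover have "F_min x C \<subseteq> F_min z C"
    using F_min_subset_open_segment xC assms(3) z .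
  ultimately have "C \<subseteq> closure (F_min z C)"
    using closure_mono by blast
  moreover have "z \<in> C"
    using assms(1) xC assms(3) z convex_contains_open_segment by blast
  ultimately show "z \<in> fri C"
    unfolding fri_def by blast
qed

theorem proposition2p1:
  fixes C :: "'a::topological_real_vector set"
  assumes "convex C"
  shows "convex (fri C) \<and> fri C \<subseteq> C"
proof
  show "convex (fri C)"
    unfolding convex_contains_open_segment
    using open_segment_subset_fri[OF assms] fri_subset by blast
qed (rule fri_subset)

end
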